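(* In the setting of the context, assume $a_\sigma:=e_\sigma^\ast e_\sigma\in K$ for all $\sigma\in G$ and let $\mathcal N$ be the (assumed nonempty) set of unital hermitian cones on $(K,\ast)$ containing all $a_\sigma$, $\sigma\in G$. For $N\in\mathcal N$ and $\sigma\in G$ put $N_\sigma=\{(n/a_\sigma)^{\sigma^{-1}}:n\in N\}=\{k\in K: a_\sigma k^\sigma\in N\}$. Then $N_\sigma\in\mathcal N$ and $(N_\tau)_\sigma=N_{\tau\sigma}$ for all $\sigma,\tau\in G$; thus this defines an action of $G$ on $\mathcal N$.
   Context: Let $K/F$ be a finite Galois extension of fields of characteristic $0$ with Galois group $G$; write $k^\sigma$ for the image of $k$ under $\sigma$. Let $\Phi$ be a normalized $2$-cocycle $G\times G\to K\setminus\{0\}$ and $D=(K/F,\Phi)$ the crossed product: right $K$-vector space with basis $(e_\sigma)_{\sigma\in G}$, $e_{\mathrm{id}}=1$, multiplication $(\sum e_\sigma c_\sigma)(\sum e_\tau d_\tau)=\sum e_{\sigma\tau}\Phi(\sigma,\tau)c_\sigma^\tau d_\tau$ (so $ke_\sigma=e_\sigma k^\sigma$). Assume $D$ is a division algebra and $\ast$ is an involution on $D$ with $K^\ast\subseteq K$. A unital hermitian cone on a ring $R$ with involution $\ast$ is a subset $M\subseteq\{r:r^\ast=r\}$ with $1\in M$, $M+M\subseteq M$, $aMa^\ast\subseteq M$ for all $a\in R$, and $M\cap-M=\{0\}$. *)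

theory Defs
  imports Main
begin

text \<open>Group elements are field automorphisms of the type 'k (the field K).
  We write k^sigma as sigma k.  The crossed-product rule k e_sigma = e_sigma k^sigma
  forces the right-action convention k^(sigma tau) = (k^sigma)^tau, i.e. the abstract
  product sigma tau corresponds to the function composition tau o sigma.\<close>

definition field_aut :: "('k::field \<Rightarrow> 'k) \<Rightarrow> bool" where
  "field_aut s \<longleftrightarrow> bij s \<and> (\<forall>x y. s (x + y) = s x + s y) \<and> (\<forall>x y. s (x * y) = s x * s y)"

text \<open>Elements of the crossed product D = (K/F, Phi): coefficient functions G -> K
  (c_sigma = x sigma), vanishing outside G.\<close>

definition cp_carrier :: "('k \<Rightarrow> 'k) set \<Rightarrow> (('k \<Rightarrow> 'k) \<Rightarrow> 'k::field) set" where
  "cp_carrier G = {x. \<forall>s. s \<notin> G \<longrightarrow> x s = 0}"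

definition cp_add :: "(('k \<Rightarrow> 'k) \<Rightarrow> 'k::field) \<Rightarrow> (('k \<Rightarrow> 'k) \<Rightarrow> 'k) \<Rightarrow> (('k \<Rightarrow> 'k) \<Rightarrow> 'k)" where
  "cp_add x y = (\<lambda>r. x r + y r)"

definition cp_zero :: "('k \<Rightarrow> 'k) \<Rightarrow> 'k::field" where
  "cp_zero = (\<lambda>r. 0)"

text \<open>(sum e_s c_s)(sum e_t d_t) = sum e_(s t) Phi(s,t) c_s^t d_t, with s t = t o s.\<close>
definition cp_mult :: "('k \<Rightarrow> 'k) set \<Rightarrow> (('k \<Rightarrow> 'k) \<Rightarrow> ('k \<Rightarrow> 'k) \<Rightarrow> 'k::field)
    \<Rightarrow> (('k \<Rightarrow> 'k) \<Rightarrow> 'k) \<Rightarrow> (('k \<Rightarrow> 'k) \<Rightarrow> 'k) \<Rightarrow> (('k \<Rightarrow> 'k) \<Rightarrow> 'k)" where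
  "cp_mult G Phi x y = (\<lambda>r. \<Sum>s\<in>G. \<Sum>t\<in>G. if t \<circ> s = r then Phi s t * t (x s) * y t else 0)"

definition cp_e :: "('k \<Rightarrow> 'k) \<Rightarrow> (('k \<Rightarrow> 'k) \<Rightarrow> 'k::field)" where
  "cp_e s = (\<lambda>r. if r = s then 1 else 0)"

definition cp_emb :: "'k \<Rightarrow> (('k \<Rightarrow> 'k) \<Rightarrow> 'k::field)" where
  "cp_emb k = (\<lambda>r. if r = id then k else 0)"

definition cp_one :: "('k \<Rightarrow> 'k) \<Rightarrow> 'k::field" where
  "cp_one = cp_emb 1"

text \<open>Restriction of the involution to K (meaningful when K^* \<subseteq> K).\<close>
definition kstar :: "((('k \<Rightarrow> 'k) \<Rightarrow> 'k) \<Rightarrow> (('k \<Rightarrow> 'k) \<Rightarrow> 'k)) \<Rightarrow> 'k \<Rightarrow> 'k::field" where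
  "kstar star k = (THE k'. star (cp_emb k) = cp_emb k')"

definition cp_a :: "('k \<Rightarrow> 'k) set \<Rightarrow> (('k \<Rightarrow> 'k) \<Rightarrow> ('k \<Rightarrow> 'k) \<Rightarrow> 'k::field)
    \<Rightarrow> ((('k \<Rightarrow> 'k) \<Rightarrow> 'k) \<Rightarrow> (('k \<Rightarrow> 'k) \<Rightarrow> 'k)) \<Rightarrow> ('k \<Rightarrow> 'k) \<Rightarrow> 'k" where
  "cp_a G Phi star s = (THE k. cp_mult G Phi (star (cp_e s)) (cp_e s) = cp_emb k)"

definition unital_herm_cone :: "('a::ring_1 \<Rightarrow> 'a) \<Rightarrow> 'a set \<Rightarrow> bool" where
  "unital_herm_cone invl M \<longleftrightarrow>
     M \<subseteq> {r. invl r = r} \<and> 1 \<in> M \<and> (\<forall>x\<in>M. \<forall>y\<in>M. x + y \<in> M) \<and>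
     (\<forall>a. \<forall>m\<in>M. a * m * invl a \<in> M) \<and> M \<inter> uminus ` M = {0}"

definition cone_shift :: "(('k::field \<Rightarrow> 'k) \<Rightarrow> 'k) \<Rightarrow> 'k set \<Rightarrow> ('k \<Rightarrow> 'k) \<Rightarrow> 'k set" where
  "cone_shift a N s = {k. a s * s k \<in> N}"

end

theory Submission imports Defs begin

(* Write a_s = e_s^* e_s and let k |-> k^* be the restriction of the
   involution to K.  Group elements are automorphisms of K acting on the right, so
   the product "s then t" is the composition t o s.  Everything follows from three
   facts about the crossed product:
   (1) k |-> k^* is a field automorphism of K commuting with every s in G;
   (2) e_s^* is a monomial e_{s^-1} v_s with v_s <> 0, hence a_s = Phi(s^-1,s) s(v_s) <> 0;
   (3) the cocycle identity  a_t t(a_s) = c c^* a_{t o s}  with c = Phi(s,t) <> 0,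
       obtained by applying the involution to e_s e_t = e_{t o s} Phi(s,t). *)


section \<open>Field automorphisms\<close>

lemma field_aut_bij: "field_aut s \<Longrightarrow> bij s"
  by (simp add: field_aut_def)

lemma field_aut_add: "field_aut s \<Longrightarrow> s (x + y) = s x + s y"
  by (simp add: field_aut_def)

lemma field_aut_mult: "field_aut s \<Longrightarrow> s (x * y) = s x * s y"
  by (simp add: field_aut_def)

lemma field_aut_apply_inv: "field_aut s \<Longrightarrow> s (inv s y) = y"
  by (simp add: field_aut_def bij_is_surj surj_f_inv_f)

lemma field_aut_inv_apply: "field_aut s \<Longrightarrow> inv s (s x) = x"
  by (simp add: field_aut_def bij_is_inj)

lemma field_aut_eq_iff: "field_aut s \<Longrightarrow> s x = s y \<longleftrightarrow> x = y"
  by (metis field_aut_inv_apply)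

lemma field_aut_zero:
  assumes "field_aut s" shows "s 0 = 0"
proof -
  have "s 0 + s 0 = s 0 + 0" using field_aut_add[OF assms, of 0 0] by simp
  then show ?thesis by (rule add_left_imp_eq)
qed

lemma field_aut_uminus: "field_aut s \<Longrightarrow> s (- x) = - s x"
  using field_aut_add[of s x "- x"] field_aut_zero[of s] by (simp add: minus_unique)

lemma field_aut_one:
  assumes "field_aut s" shows "s 1 = 1"
proof -
  have "s 1 * s (inv s 1) = s (inv s 1)"
    using field_aut_mult[OF assms, of 1 "inv s 1"] by simp
  then show ?thesis using field_aut_apply_inv[OF assms] by simp
qed

lemma field_aut_eq_0_iff: "field_aut s \<Longrightarrow> s x = 0 \<longleftrightarrow> x = 0"
  by (metis field_aut_eq_iff field_aut_zero)

lemma involution_field_aut: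
  assumes "\<And>x. f (f x) = x" "\<And>x y. f (x + y) = f x + f y" "\<And>x y. f (x * y) = f x * f y"
  shows "field_aut f"
  using assms involuntory_imp_bij unfolding field_aut_def by blast


section \<open>Shifted cones\<close>

text \<open>Throughout, ks is a field automorphism playing the role of the involution on K
  (K is commutative, so an anti-automorphism is an automorphism).\<close>

lemma cone_zero: "unital_herm_cone ks N \<Longrightarrow> 0 \<in> N"
  unfolding unital_herm_cone_def by (metis mult_zero_left)

lemma cone_norm_mult_iff:
  fixes N :: "'k::field set"
  assumes N: "unital_herm_cone ks N" and ks: "field_aut ks" and c: "c \<noteq> 0"
  shows "c * ks c * y \<in> N \<longleftrightarrow> y \<in> N"
proof
  have conj: "\<And>b m. m \<in> N \<Longrightarrow> b * m * ks b \<in> N"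
    using N unfolding unital_herm_cone_def by blast
  show "y \<in> N \<Longrightarrow> c * ks c * y \<in> N" using conj[of y c] by (simp add: ac_simps)
  assume "c * ks c * y \<in> N"
  then have "inverse c * (c * ks c * y) * ks (inverse c) \<in> N" by (rule conj)
  moreover have "ks c * ks (inverse c) = 1"
    using c field_aut_mult[OF ks, of c "inverse c", symmetric] field_aut_one[OF ks] by simp
  ultimately show "y \<in> N" using c by (simp add: field_simps)
qed

lemma cone_shift_cone:
  fixes N :: "'k::field set"
  assumes N: "unital_herm_cone ks N" and ks: "field_aut ks" and s: "field_aut s"
    and comm: "\<And>k. ks (s k) = s (ks k)" and aN: "a s \<in> N" and a_nz: "a s \<noteq> 0"
  shows "unital_herm_cone ks (cone_shift a N s)"
proof -
  have herm: "\<And>m. m \<in> N \<Longrightarrow> ks m = m"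
    and add: "\<And>x y. x \<in> N \<Longrightarrow> y \<in> N \<Longrightarrow> x + y \<in> N"
    and conj: "\<And>b m. m \<in> N \<Longrightarrow> b * m * ks b \<in> N"
    and pointed: "N \<inter> uminus ` N = {0}"
    using N unfolding unital_herm_cone_def by auto
  define M where "M = cone_shift a N s"
  have M_iff: "\<And>k. k \<in> M \<longleftrightarrow> a s * s k \<in> N" unfolding M_def cone_shift_def by simp
  have herm_M: "ks k = k" if "k \<in> M" for k
  proof -
    have "ks (a s * s k) = a s * s k" using that M_iff herm by blast
    then have "s (ks k) = s k"
      using a_nz field_aut_mult[OF ks] comm herm[OF aN] by simp
    then show ?thesis using field_aut_eq_iff[OF s] by blast
  qed
  have one_M: "1 \<in> M" using M_iff aN field_aut_one[OF s] by simp
  have add_M: "x + y \<in> M" if "x \<in> M" "y \<in> M" for x y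
    using that M_iff add field_aut_add[OF s] by (simp add: distrib_left)
  have conj_M: "b * m * ks b \<in> M" if "m \<in> M" for b m
  proof -
    have "s b * (a s * s m) * ks (s b) \<in> N" using that M_iff conj by blast
    then show ?thesis using M_iff comm field_aut_mult[OF s] by (simp add: ac_simps)
  qed
  have pointed_M: "k = 0" if "k \<in> M" "- k \<in> M" for k
  proof -
    have "a s * s k \<in> N" "- (a s * s k) \<in> N"
      using that M_iff field_aut_uminus[OF s] by simp_all
    then have "a s * s k \<in> N \<inter> uminus ` N" by (metis IntI image_eqI minus_minus)
    then have "a s * s k = 0" using pointed by blast
    then show ?thesis using a_nz field_aut_eq_0_iff[OF s] by simp
  qed
  have "0 \<in> M" using M_iff cone_zero[OF N] field_aut_zero[OF s] by simp
  with pointed_M have "M \<inter> uminus ` M = {0}" by force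
  with herm_M one_M add_M conj_M show ?thesis
    unfolding M_def[symmetric] unital_herm_cone_def by blast
qed

lemma cone_shift_image:
  assumes s: "field_aut s" and a_nz: "a s \<noteq> 0"
  shows "cone_shift a N s = {inv s (n / a s) | n. n \<in> N}"
proof (rule set_eqI, rule iffI)
  fix k assume "k \<in> cone_shift a N s"
  moreover have "k = inv s ((a s * s k) / a s)" using a_nz field_aut_inv_apply[OF s] by simp
  ultimately show "k \<in> {inv s (n / a s) | n. n \<in> N}" unfolding cone_shift_def by blast
next
  fix k assume "k \<in> {inv s (n / a s) | n. n \<in> N}"
  then obtain n where "n \<in> N" "k = inv s (n / a s)" by blast
  then show "k \<in> cone_shift a N s"
    unfolding cone_shift_def using a_nz field_aut_apply_inv[OF s] by simp
qed

lemma cone_shift_shift: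
  fixes N :: "'k::field set"
  assumes N: "unital_herm_cone ks N" and ks: "field_aut ks" and t: "field_aut t"
    and c: "c \<noteq> 0" and cocycle: "a t * t (a s) = c * ks c * a (t \<circ> s)"
  shows "cone_shift a (cone_shift a N t) s = cone_shift a N (t \<circ> s)"
proof (rule set_eqI)
  fix k
  have "a t * t (a s * s k) = c * ks c * (a (t \<circ> s) * (t \<circ> s) k)"
    using cocycle field_aut_mult[OF t] by (simp add: ac_simps)
  then show "k \<in> cone_shift a (cone_shift a N t) s \<longleftrightarrow> k \<in> cone_shift a N (t \<circ> s)"
    unfolding cone_shift_def using cone_norm_mult_iff[OF N ks c] by simp
qed

lemma cone_shift_contains:
  fixes N :: "'k::field set"
  assumes N: "unital_herm_cone ks N" and ks: "field_aut ks"
    and c: "c \<noteq> 0" and cocycle: "a s * s (a t) = c * ks c * a (s \<circ> t)"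
    and "a (s \<circ> t) \<in> N"
  shows "a t \<in> cone_shift a N s"
  unfolding cone_shift_def using assms cone_norm_mult_iff[OF N ks c] by simp


section \<open>Monomials in the crossed product\<close>

definition cp_mono :: "('k \<Rightarrow> 'k) \<Rightarrow> 'k \<Rightarrow> (('k \<Rightarrow> 'k) \<Rightarrow> 'k::field)" where
  "cp_mono u c = (\<lambda>r. if r = u then c else 0)"

lemma cp_e_eq_mono: "cp_e s = cp_mono s 1"
  by (simp add: cp_e_def cp_mono_def)

lemma cp_emb_eq_mono: "cp_emb k = cp_mono id k"
  by (simp add: cp_emb_def cp_mono_def)

lemma cp_mono_eq_iff: "cp_mono u c = cp_mono u d \<longleftrightarrow> c = d"
  by (metis cp_mono_def)

lemma cp_mono_carrier: "u \<in> G \<Longrightarrow> cp_mono u c \<in> cp_carrier G"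
  by (simp add: cp_carrier_def cp_mono_def)

lemma cp_mult_mono_right:
  assumes "w \<in> G" "finite G"
  shows "cp_mult G Phi x (cp_mono w d) r
           = (\<Sum>p\<in>G. if w \<circ> p = r then Phi p w * w (x p) * d else 0)"
  unfolding cp_mult_def
proof (rule sum.cong[OF refl])
  fix p
  have eq: "(\<lambda>t. if t \<circ> p = r then Phi p t * t (x p) * cp_mono w d t else 0)
      = (\<lambda>t. if t = w then (if w \<circ> p = r then Phi p w * w (x p) * d else 0) else 0)"
    by (auto simp: cp_mono_def)
  show "(\<Sum>t\<in>G. if t \<circ> p = r then Phi p t * t (x p) * cp_mono w d t else 0)
           = (if w \<circ> p = r then Phi p w * w (x p) * d else 0)"
    unfolding eq using assms by simp
qed

lemma cp_mult_mono:
  assumes "u \<in> G" "w \<in> G" "w 0 = 0" "finite G"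
  shows "cp_mult G Phi (cp_mono u c) (cp_mono w d) = cp_mono (w \<circ> u) (Phi u w * w c * d)"
proof
  fix r
  have eq: "(\<lambda>p. if w \<circ> p = r then Phi p w * w (cp_mono u c p) * d else 0)
     = (\<lambda>p. if p = u then (if w \<circ> u = r then Phi u w * w c * d else 0) else 0)"
    using assms by (auto simp: cp_mono_def)
  show "cp_mult G Phi (cp_mono u c) (cp_mono w d) r = cp_mono (w \<circ> u) (Phi u w * w c * d) r"
    unfolding cp_mult_mono_right[OF assms(2,4)] eq using assms by (simp add: cp_mono_def)
qed

lemma cp_mult_mono_at:
  assumes "w \<in> G" "p \<in> G" "inj w" "finite G"
  shows "cp_mult G Phi x (cp_mono w d) (w \<circ> p) = Phi p w * w (x p) * d"
proof -
  have "\<And>q. w \<circ> q = w \<circ> p \<longleftrightarrow> q = p"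
    using assms(3) by (metis fun.inj_map_strong inj_eq)
  then show ?thesis using assms by (simp add: cp_mult_mono_right)
qed


section \<open>Crossed products with involution\<close>

locale crossed_product_involution =
  fixes G :: "('k::field \<Rightarrow> 'k) set"
    and Phi :: "('k \<Rightarrow> 'k) \<Rightarrow> ('k \<Rightarrow> 'k) \<Rightarrow> 'k"
    and star :: "(('k \<Rightarrow> 'k) \<Rightarrow> 'k) \<Rightarrow> (('k \<Rightarrow> 'k) \<Rightarrow> 'k)"
  assumes G_fin: "finite G"
    and G_aut: "s \<in> G \<Longrightarrow> field_aut s"
    and G_id: "id \<in> G"
    and G_comp: "s \<in> G \<Longrightarrow> t \<in> G \<Longrightarrow> s \<circ> t \<in> G"
    and G_inv: "s \<in> G \<Longrightarrow> inv s \<in> G"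
    and Phi_nz: "s \<in> G \<Longrightarrow> t \<in> G \<Longrightarrow> Phi s t \<noteq> 0"
    and Phi_id_left: "s \<in> G \<Longrightarrow> Phi id s = 1"
    and Phi_id_right: "s \<in> G \<Longrightarrow> Phi s id = 1"
    and Phi_cocycle: "s \<in> G \<Longrightarrow> t \<in> G \<Longrightarrow> r \<in> G \<Longrightarrow>
        Phi (t \<circ> s) r * r (Phi s t) = Phi s (r \<circ> t) * Phi t r"
    and star_closed: "x \<in> cp_carrier G \<Longrightarrow> star x \<in> cp_carrier G"
    and star_add: "x \<in> cp_carrier G \<Longrightarrow> y \<in> cp_carrier G \<Longrightarrow>
        star (cp_add x y) = cp_add (star x) (star y)"
    and star_mult: "x \<in> cp_carrier G \<Longrightarrow> y \<in> cp_carrier G \<Longrightarrow>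
        star (cp_mult G Phi x y) = cp_mult G Phi (star y) (star x)"
    and star_invol: "x \<in> cp_carrier G \<Longrightarrow> star (star x) = x"
    and star_K: "\<exists>k'. star (cp_emb k) = cp_emb k'"
    and a_in_K: "s \<in> G \<Longrightarrow> \<exists>k. cp_mult G Phi (star (cp_e s)) (cp_e s) = cp_emb k"
begin

abbreviation ks :: "'k \<Rightarrow> 'k" where "ks \<equiv> kstar star"

abbreviation a :: "('k \<Rightarrow> 'k) \<Rightarrow> 'k" where "a \<equiv> cp_a G Phi star"

lemma mono_mult:
  "u \<in> G \<Longrightarrow> w \<in> G \<Longrightarrow>
     cp_mult G Phi (cp_mono u c) (cp_mono w d) = cp_mono (w \<circ> u) (Phi u w * w c * d)"
  by (simp add: cp_mult_mono G_fin G_aut field_aut_zero)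

lemma star_mono_mult:
  "u \<in> G \<Longrightarrow> w \<in> G \<Longrightarrow>
     star (cp_mult G Phi (cp_mono u c) (cp_mono w d))
       = cp_mult G Phi (star (cp_mono w d)) (star (cp_mono u c))"
  by (simp add: star_mult cp_mono_carrier)

lemma inv_right: "s \<in> G \<Longrightarrow> s \<circ> inv s = id"
  by (rule surj_iff[THEN iffD1, OF bij_is_surj[OF field_aut_bij[OF G_aut]]])

lemma inv_left: "s \<in> G \<Longrightarrow> inv s \<circ> s = id"
  by (rule inj_iff[THEN iffD1, OF bij_is_inj[OF field_aut_bij[OF G_aut]]])

lemma star_emb: "star (cp_mono id k) = cp_mono id (ks k)"
proof -
  obtain k' where "star (cp_emb k) = cp_emb k'" using star_K by blast
  then show ?thesis unfolding kstar_def cp_emb_eq_mono by (simp add: cp_mono_eq_iff)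
qed

lemma star_zero: "star cp_zero = cp_zero"
proof -
  have "cp_zero \<in> cp_carrier G" by (simp add: cp_carrier_def cp_zero_def)
  moreover have "cp_add cp_zero cp_zero = (cp_zero :: ('k \<Rightarrow> 'k) \<Rightarrow> 'k)"
    by (simp add: cp_add_def cp_zero_def)
  ultimately have "star cp_zero = cp_add (star cp_zero) (star cp_zero)" by (metis star_add)
  then have "\<And>r. star cp_zero r + star cp_zero r = star cp_zero r + 0"
    by (metis add.right_neutral cp_add_def)
  then have "\<And>r. star cp_zero r = 0" by (rule add_left_imp_eq)
  then show ?thesis by (simp add: fun_eq_iff cp_zero_def)
qed

lemma ks_field_aut: "field_aut ks"
proof (rule involution_field_aut)
  fix x y :: 'k
  show "ks (ks x) = x"
    using star_invol[OF cp_mono_carrier[OF G_id]] by (simp add: star_emb cp_mono_eq_iff)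
  have "cp_mono id (x + y) = cp_add (cp_mono id x) (cp_mono id y)"
    by (auto simp: cp_add_def cp_mono_def)
  then have "cp_mono id (ks (x + y)) = cp_add (cp_mono id (ks x)) (cp_mono id (ks y))"
    by (metis star_add cp_mono_carrier[OF G_id] star_emb)
  then show "ks (x + y) = ks x + ks y"
    by (metis cp_add_def cp_mono_def)
  have "cp_mono id (x * y) = cp_mult G Phi (cp_mono id x) (cp_mono id y)"
    by (simp add: mono_mult G_id Phi_id_left)
  then have "cp_mono id (ks (x * y)) = cp_mult G Phi (cp_mono id (ks y)) (cp_mono id (ks x))"
    by (metis star_mono_mult G_id star_emb)
  then show "ks (x * y) = ks x * ks y"
    by (simp add: mono_mult G_id Phi_id_left cp_mono_eq_iff mult.commute)
qed

definition star_coeff :: "('k \<Rightarrow> 'k) \<Rightarrow> 'k" where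
  "star_coeff s = star (cp_mono s 1) (inv s)"

text \<open>Fact (2): since e_s* e_s lies in K, e_s* is the monomial e_{s^-1} v_s.\<close>

lemma star_basis: "s \<in> G \<Longrightarrow> star (cp_mono s 1) = cp_mono (inv s) (star_coeff s)"
proof (rule ext)
  fix r assume sG: "s \<in> G"
  define x where "x = star (cp_mono s 1)"
  obtain k where k: "cp_mult G Phi x (cp_mono s 1) = cp_mono id k"
    using a_in_K[OF sG] unfolding x_def cp_e_eq_mono cp_emb_eq_mono by blast
  have "x r = 0" if "r \<in> G" "r \<noteq> inv s"
  proof -
    have "s \<circ> r \<noteq> id"
      using that inv_left[OF sG] by (metis comp_assoc comp_id fun.map_id)
    then have "cp_mult G Phi x (cp_mono s 1) (s \<circ> r) = 0" using k by (simp add: cp_mono_def)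
    moreover have "cp_mult G Phi x (cp_mono s 1) (s \<circ> r) = Phi r s * s (x r)"
      using cp_mult_mono_at[OF sG \<open>r \<in> G\<close> _ G_fin] G_aut[OF sG]
      by (simp add: field_aut_bij bij_is_inj)
    ultimately show ?thesis using Phi_nz[OF \<open>r \<in> G\<close> sG] field_aut_eq_0_iff[OF G_aut[OF sG]] by simp
  qed
  moreover have "x r = 0" if "r \<notin> G"
    using that star_closed[OF cp_mono_carrier[OF sG]] unfolding x_def cp_carrier_def by blast
  ultimately show "star (cp_mono s 1) r = cp_mono (inv s) (star_coeff s) r"
    unfolding x_def star_coeff_def cp_mono_def by (metis)
qed

lemma star_coeff_nz: "s \<in> G \<Longrightarrow> star_coeff s \<noteq> 0"
proof
  assume sG: "s \<in> G" and "star_coeff s = 0"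
  then have "star (cp_mono s 1) = cp_zero"
    using star_basis by (simp add: cp_mono_def cp_zero_def fun_eq_iff)
  then have "cp_mono s 1 = (cp_zero :: ('k \<Rightarrow> 'k) \<Rightarrow> 'k)"
    by (metis star_invol cp_mono_carrier[OF sG] star_zero)
  then show False by (metis cp_mono_def cp_zero_def zero_neq_one)
qed

lemma a_eq: "s \<in> G \<Longrightarrow> a s = Phi (inv s) s * s (star_coeff s)"
proof -
  assume sG: "s \<in> G"
  have "cp_mult G Phi (star (cp_e s)) (cp_e s) = cp_emb (Phi (inv s) s * s (star_coeff s))"
    unfolding cp_e_eq_mono cp_emb_eq_mono star_basis[OF sG] mono_mult[OF G_inv[OF sG] sG]
      inv_right[OF sG] by simp
  then show ?thesis unfolding cp_a_def cp_emb_eq_mono by (simp add: cp_mono_eq_iff)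
qed

lemma a_nz: "s \<in> G \<Longrightarrow> a s \<noteq> 0"
  by (simp add: a_eq Phi_nz G_inv star_coeff_nz field_aut_eq_0_iff G_aut)

text \<open>Fact (1), second half: applying the involution to k e_s = e_s k^s shows
  that the involution commutes with s.\<close>

lemma ks_comm: "s \<in> G \<Longrightarrow> ks (s k) = s (ks k)"
proof -
  assume sG: "s \<in> G"
  have "cp_mult G Phi (cp_mono id k) (cp_mono s 1) = cp_mult G Phi (cp_mono s 1) (cp_mono id (s k))"
    by (simp add: mono_mult sG G_id Phi_id_left Phi_id_right)
  then have "cp_mult G Phi (star (cp_mono s 1)) (star (cp_mono id k))
      = cp_mult G Phi (star (cp_mono id (s k))) (star (cp_mono s 1))"
    by (metis star_mono_mult sG G_id)
  then have "star_coeff s * ks k = inv s (ks (s k)) * star_coeff s"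
    by (simp add: star_basis sG star_emb mono_mult G_inv G_id Phi_id_left Phi_id_right
        cp_mono_eq_iff)
  then have "ks k = inv s (ks (s k))" using star_coeff_nz[OF sG] by (simp add: mult.commute)
  then show ?thesis using field_aut_apply_inv[OF G_aut[OF sG]] by simp
qed

text \<open>Applying the involution to e_s e_t = e_{t \<circ> s} Phi(s,t) relates the coefficients
  v_s, v_t and v_{t \<circ> s}.\<close>

lemma star_coeff_comp:
  assumes sG: "s \<in> G" and tG: "t \<in> G"
  shows "Phi (inv t) (inv s) * inv s (star_coeff t) * star_coeff s
           = inv (t \<circ> s) (ks (Phi s t)) * star_coeff (t \<circ> s)"
proof -
  define u where "u = t \<circ> s"
  have uG: "u \<in> G" using G_comp sG tG u_def by simp
  have inv_u: "inv u = inv s \<circ> inv t"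
    unfolding u_def using o_inv_distrib field_aut_bij G_aut sG tG by blast
  have "cp_mult G Phi (cp_mono s 1) (cp_mono t 1) = cp_mult G Phi (cp_mono u 1) (cp_mono id (Phi s t))"
    unfolding mono_mult[OF sG tG] mono_mult[OF uG G_id]
    using Phi_id_right[OF uG] field_aut_one[OF G_aut[OF tG]] u_def by simp
  then have "cp_mult G Phi (star (cp_mono t 1)) (star (cp_mono s 1))
      = cp_mult G Phi (star (cp_mono id (Phi s t))) (star (cp_mono u 1))"
    by (metis star_mono_mult sG tG uG G_id)
  then have "cp_mono (inv u) (Phi (inv t) (inv s) * inv s (star_coeff t) * star_coeff s)
      = cp_mono (inv u) (inv u (ks (Phi s t)) * star_coeff u)"
    unfolding star_basis[OF sG] star_basis[OF tG] star_basis[OF uG] star_emb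
      mono_mult[OF G_inv[OF tG] G_inv[OF sG]] mono_mult[OF G_id G_inv[OF uG]]
    using Phi_id_left[OF G_inv[OF uG]] by (simp add: inv_u)
  then show ?thesis by (simp add: cp_mono_eq_iff u_def)
qed

lemma a_cocycle:
  assumes sG: "s \<in> G" and tG: "t \<in> G"
  shows "a t * t (a s) = Phi s t * ks (Phi s t) * a (t \<circ> s)"
proof -
  define u where "u = t \<circ> s"
  define v where "v = star_coeff"
  have uG: "u \<in> G" using G_comp sG tG u_def by simp
  have at: "field_aut t" and as: "field_aut s" and au: "field_aut u"
    using G_aut sG tG uG by auto
  have inv_u: "inv u = inv s \<circ> inv t"
    unfolding u_def using o_inv_distrib field_aut_bij at as by blast
  have "u (Phi (inv t) (inv s) * inv s (v t) * v s) = u (inv u (ks (Phi s t)) * v u)"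
    using star_coeff_comp[OF sG tG] unfolding u_def v_def by simp
  moreover have "u (inv s (v t)) = t (v t)"
    unfolding u_def using field_aut_apply_inv[OF as] by simp
  ultimately have coeffs: "u (Phi (inv t) (inv s)) * t (v t) * t (s (v s)) = ks (Phi s t) * u (v u)"
    using field_aut_mult[OF au] field_aut_apply_inv[OF au] unfolding u_def by simp
  have Phi1: "Phi (inv s \<circ> inv t) u * u (Phi (inv t) (inv s)) = Phi (inv t) t * Phi (inv s) u"
  proof -
    have "u \<circ> inv s = t" unfolding u_def using inv_right[OF sG] by (simp add: comp_assoc)
    then show ?thesis using Phi_cocycle[OF G_inv[OF tG] G_inv[OF sG] uG] by simp
  qed
  have Phi2: "t (Phi (inv s) s) = Phi (inv s) u * Phi s t"
    using Phi_cocycle[OF G_inv[OF sG] sG tG] inv_right[OF sG] Phi_id_left[OF tG] u_def by simp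
  have "Phi s t * ks (Phi s t) * a u = Phi s t * Phi (inv u) u * (ks (Phi s t) * u (v u))"
    using a_eq[OF uG] v_def by (simp add: ac_simps)
  also have "\<dots> = Phi s t * (Phi (inv u) u * u (Phi (inv t) (inv s))) * t (v t) * t (s (v s))"
    using coeffs[symmetric] by (simp add: ac_simps)
  also have "\<dots> = (Phi (inv t) t * t (v t)) * (t (Phi (inv s) s) * t (s (v s)))"
    using Phi1 Phi2 inv_u by (simp add: ac_simps)
  also have "\<dots> = a t * t (a s)"
    using a_eq sG tG field_aut_mult[OF at] v_def by simp
  finally show ?thesis unfolding u_def by simp
qed

end


theorem lemma4p1:
  fixes G :: "('k::field_char_0 \<Rightarrow> 'k) set"
    and Phi :: "('k \<Rightarrow> 'k) \<Rightarrow> ('k \<Rightarrow> 'k) \<Rightarrow> 'k"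
    and star :: "(('k \<Rightarrow> 'k) \<Rightarrow> 'k) \<Rightarrow> (('k \<Rightarrow> 'k) \<Rightarrow> 'k)"
  assumes G_fin: "finite G"
    and G_aut: "\<forall>s\<in>G. field_aut s"
    and G_id: "id \<in> G"
    and G_comp: "\<forall>s\<in>G. \<forall>t\<in>G. s \<circ> t \<in> G"
    and G_inv: "\<forall>s\<in>G. inv s \<in> G"
    and Phi_nz: "\<forall>s\<in>G. \<forall>t\<in>G. Phi s t \<noteq> 0"
    and Phi_norm: "\<forall>s\<in>G. Phi id s = 1 \<and> Phi s id = 1"
    and Phi_cocycle: "\<forall>s\<in>G. \<forall>t\<in>G. \<forall>r\<in>G.
        Phi (t \<circ> s) r * r (Phi s t) = Phi s (r \<circ> t) * Phi t r"
    and D_division: "\<forall>x\<in>cp_carrier G. x \<noteq> cp_zero \<longrightarrow>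
        (\<exists>y\<in>cp_carrier G. cp_mult G Phi x y = cp_one \<and> cp_mult G Phi y x = cp_one)"
    and star_closed: "\<forall>x\<in>cp_carrier G. star x \<in> cp_carrier G"
    and star_add: "\<forall>x\<in>cp_carrier G. \<forall>y\<in>cp_carrier G. star (cp_add x y) = cp_add (star x) (star y)"
    and star_mult: "\<forall>x\<in>cp_carrier G. \<forall>y\<in>cp_carrier G.
        star (cp_mult G Phi x y) = cp_mult G Phi (star y) (star x)"
    and star_invol: "\<forall>x\<in>cp_carrier G. star (star x) = x"
    and star_K: "\<forall>k. \<exists>k'. star (cp_emb k) = cp_emb k'"
    and a_in_K: "\<forall>s\<in>G. \<exists>k. cp_mult G Phi (star (cp_e s)) (cp_e s) = cp_emb k"
    and NN_ne: "{N. unital_herm_cone (kstar star) N \<and> (\<forall>s\<in>G. cp_a G Phi star s \<in> N)} \<noteq> {}"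
  shows "\<forall>N\<in>{N. unital_herm_cone (kstar star) N \<and> (\<forall>s\<in>G. cp_a G Phi star s \<in> N)}.
           \<forall>s\<in>G.
             cone_shift (cp_a G Phi star) N s = {(inv s) (n / cp_a G Phi star s) | n. n \<in> N} \<and>
             cone_shift (cp_a G Phi star) N s \<in>
               {N. unital_herm_cone (kstar star) N \<and> (\<forall>s\<in>G. cp_a G Phi star s \<in> N)} \<and>
             (\<forall>t\<in>G. cone_shift (cp_a G Phi star) (cone_shift (cp_a G Phi star) N t) s
                      = cone_shift (cp_a G Phi star) N (t \<circ> s))"
proof (intro ballI)
  interpret D: crossed_product_involution G Phi star
    by unfold_locales (use assms in \<open>simp_all\<close>)
  fix N s assume "N \<in> {N. unital_herm_cone (kstar star) N \<and> (\<forall>s\<in>G. cp_a G Phi star s \<in> N)}"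
    and sG: "s \<in> G"
  then have N: "unital_herm_cone D.ks N" and aN: "\<And>t. t \<in> G \<Longrightarrow> D.a t \<in> N" by auto
  have s: "field_aut s" using G_aut sG by blast
  have cone: "unital_herm_cone D.ks (cone_shift D.a N s)"
    by (rule cone_shift_cone[where a = D.a,
          OF N D.ks_field_aut s D.ks_comm[OF sG] aN[OF sG] D.a_nz[OF sG]])
  have contains: "\<forall>t\<in>G. D.a t \<in> cone_shift D.a N s"
  proof
    fix t assume tG: "t \<in> G"
    show "D.a t \<in> cone_shift D.a N s"
      using cone_shift_contains[where a = D.a,
          OF N D.ks_field_aut D.Phi_nz[OF tG sG] D.a_cocycle[OF tG sG] aN[OF D.G_comp[OF sG tG]]] .
  qed
  have action: "\<forall>t\<in>G. cone_shift D.a (cone_shift D.a N t) s = cone_shift D.a N (t \<circ> s)"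
  proof
    fix t assume tG: "t \<in> G"
    show "cone_shift D.a (cone_shift D.a N t) s = cone_shift D.a N (t \<circ> s)"
      using cone_shift_shift[where a = D.a, OF N D.ks_field_aut D.G_aut[OF tG] D.Phi_nz[OF sG tG]
          D.a_cocycle[OF sG tG]] .
  qed
  show "cone_shift D.a N s = {inv s (n / D.a s) | n. n \<in> N} \<and>
      cone_shift D.a N s \<in> {N. unital_herm_cone D.ks N \<and> (\<forall>s\<in>G. D.a s \<in> N)} \<and>
      (\<forall>t\<in>G. cone_shift D.a (cone_shift D.a N t) s = cone_shift D.a N (t \<circ> s))"
  proof (intro conjI)
    show "cone_shift D.a N s = {inv s (n / D.a s) | n. n \<in> N}"
      by (rule cone_shift_image[where a = D.a, OF s D.a_nz[OF sG]])
    show "cone_shift D.a N s \<in> {N. unital_herm_cone D.ks N \<and> (\<forall>s\<in>G. D.a s \<in> N)}"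
      using cone contains by simp
  qed (fact action)
qed

end
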